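(* Let $M_{cc}$ be the one-state Turing machine defined below, and let $n,m\ge 0$ be integers. Then $M_{cc}$ halts on the input string $u^n0^mh$ if and only if $n\ge 2^m-1$.
   Context: A one-state Turing machine is a tuple $\langle \{q\}, \Sigma, \Gamma, q, H, \delta\rangle$ with the following components: a unique state $q$; an input alphabet $\Sigma$ not containing the blank symbol $\sqcup$; a tape alphabet $\Gamma\supseteq\Sigma\cup\{\sqcup\}$; a set of halting symbols $H\subseteq\Gamma$; and a transition function $\delta:\Gamma\setminus H\to\Gamma\times\{L,R\}$. The tape is infinite in both directions. On input $x$, the tape holds $x$ with blanks everywhere else, and the head starts on the leftmost symbol of $x$. At each step, if the scanned symbol is in $H$, the machine halts. Otherwise, with $\delta(a)=(b,D)$ for the scanned symbol $a$, it writes $b$ and moves one cell in direction $D$. The machine $M_{cc}$ is this kind of machine with $\Sigma=\{u,0,h\}$, $\Gamma=\{\sqcup,u,U,h,0,1,Z,C,B\}$, $H=\{h\}$, and transitions $\delta(u)=(U,R)$, $\delta(0)=(1,L)$, $\delta(U)=(C,R)$, $\delta(1)=(Z,R)$, $\delta(Z)=(0,L)$, $\delta(C)=(B,L)$, $\delta(B)=(C,R)$, $\delta(\sqcup)=(\sqcup,L)$. Here $u^n0^mh$ denotes $n$ copies of $u$, followed by $m$ copies of $0$, followed by a single $h$. *)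

theory Defs
  imports Main
begin

text \<open>Generic one-state Turing machines on a two-way infinite tape indexed by int.
  The transition function is partial: None exactly on halting symbols.\<close>

datatype dir = L | R

type_synonym 'g config = "(int \<Rightarrow> 'g) \<times> int"

definition init_config :: "'g \<Rightarrow> 'g list \<Rightarrow> 'g config" where
  "init_config blank x =
     ((\<lambda>i. if 0 \<le> i \<and> i < int (length x) then x ! nat i else blank), 0)"

definition tm_step :: "('g \<Rightarrow> ('g \<times> dir) option) \<Rightarrow> 'g config \<Rightarrow> 'g config" where
  "tm_step \<delta> c = (case c of (t, p) \<Rightarrow>
     (case \<delta> (t p) of
        None \<Rightarrow> (t, p)
      | Some (b, d) \<Rightarrow> (t(p := b), if d = L then p - 1 else p + 1)))"

definition tm_halts :: "'g set \<Rightarrow> ('g \<Rightarrow> ('g \<times> dir) option) \<Rightarrow> 'g \<Rightarrow> 'g list \<Rightarrow> bool" where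
  "tm_halts H \<delta> blank x =
     (\<exists>k. case (tm_step \<delta> ^^ k) (init_config blank x) of (t, p) \<Rightarrow> t p \<in> H)"

datatype sym = Blank | Su | SU | Sh | S0 | S1 | SZ | SC | SB

definition H_cc :: "sym set" where "H_cc = {Sh}"

fun delta_cc :: "sym \<Rightarrow> (sym \<times> dir) option" where
  "delta_cc Su = Some (SU, R)"
| "delta_cc S0 = Some (S1, L)"
| "delta_cc SU = Some (SC, R)"
| "delta_cc S1 = Some (SZ, R)"
| "delta_cc SZ = Some (S0, L)"
| "delta_cc SC = Some (SB, L)"
| "delta_cc SB = Some (SC, R)"
| "delta_cc Blank = Some (Blank, L)"
| "delta_cc Sh = None"

definition M_cc_halts :: "sym list \<Rightarrow> bool" where
  "M_cc_halts x = tm_halts H_cc delta_cc Blank x"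

definition input_word :: "nat \<Rightarrow> nat \<Rightarrow> sym list" where
  "input_word n m = replicate n Su @ replicate m S0 @ [Sh]"

end

theory Submission
  imports Defs
begin

text \<open>The initial sweep turns \<open>u\<^sup>n\<close> into the fuel \<open>U\<^sup>n\<close> and leaves the head on the \<open>0\<close>-block.
  Whenever the head steps left off that block it walks over the \<open>C\<close>s to the rightmost \<open>U\<close>,
  turns it into \<open>C\<close> and walks back: one unit of fuel is spent; with no \<open>U\<close> left it walks into
  the blanks and never halts.  Getting past the lowest \<open>j\<close> digits costs exactly \<open>2\<^sup>j - 1\<close>
  units: to get past \<open>j + 1\<close> digits the head gets past \<open>j\<close> of them (turning them into \<open>Z\<close>),
  marks digit \<open>j\<close> as \<open>1\<close>, resets the \<open>Z\<close>s to \<open>0\<close> on its way to one refuel, and gets past the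
  \<open>j\<close> digits once more, after which the \<open>1\<close> becomes \<open>Z\<close>.\<close>

definition reaches :: "('g \<Rightarrow> ('g \<times> dir) option) \<Rightarrow> 'g config \<Rightarrow> 'g config \<Rightarrow> bool" where
  "reaches \<delta> = (\<lambda>c c'. c' = tm_step \<delta> c)\<^sup>*\<^sup>*"

definition halts_from :: "'g set \<Rightarrow> ('g \<Rightarrow> ('g \<times> dir) option) \<Rightarrow> 'g config \<Rightarrow> bool" where
  "halts_from H \<delta> c = (\<exists>k. case (tm_step \<delta> ^^ k) c of (t, p) \<Rightarrow> t p \<in> H)"

lemma halts_from_halting: "t p \<in> H \<Longrightarrow> halts_from H \<delta> (t, p)"
  unfolding halts_from_def by (auto intro: exI[of _ 0])

lemma tm_step_Some:
  "\<delta> (t p) = Some (b, d) \<Longrightarrow> tm_step \<delta> (t, p) = (t(p := b), if d = L then p - 1 else p + 1)"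
  by (simp add: tm_step_def)

lemma reaches_refl: "reaches \<delta> c c"
  by (simp add: reaches_def)

lemma reaches_trans [trans]: "reaches \<delta> c c' \<Longrightarrow> reaches \<delta> c' c'' \<Longrightarrow> reaches \<delta> c c''"
  unfolding reaches_def by (rule rtranclp_trans)

lemma reaches_tm_step: "tm_step \<delta> c = c' \<Longrightarrow> reaches \<delta> c c'"
  unfolding reaches_def by auto

lemma halts_from_tm_step:
  assumes "\<forall>a\<in>H. \<delta> a = None"
  shows "halts_from H \<delta> (tm_step \<delta> c) = halts_from H \<delta> c"
proof (cases c)
  case (Pair t p)
  define Q where "Q k \<longleftrightarrow> (case (tm_step \<delta> ^^ k) c of (t, p) \<Rightarrow> t p \<in> H)" for k
  have "halts_from H \<delta> c \<longleftrightarrow> Q 0 \<or> (\<exists>k. Q (Suc k))"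
    unfolding halts_from_def Q_def[symmetric] by (metis not0_implies_Suc)
  moreover have "Q 0 \<longleftrightarrow> t p \<in> H"
    by (simp add: Q_def Pair)
  moreover have "(\<exists>k. Q (Suc k)) \<longleftrightarrow> halts_from H \<delta> (tm_step \<delta> c)"
    by (simp add: Q_def halts_from_def funpow_Suc_right del: funpow.simps)
  moreover have "t p \<in> H \<Longrightarrow> tm_step \<delta> c = c"
    using assms by (simp add: Pair tm_step_def)
  ultimately show ?thesis by auto
qed

lemma halts_from_reaches:
  assumes "\<forall>a\<in>H. \<delta> a = None" and "reaches \<delta> c c'"
  shows "halts_from H \<delta> c' = halts_from H \<delta> c"
  using assms(2) unfolding reaches_def
  by (induction rule: rtranclp_induct) (simp_all add: halts_from_tm_step[OF assms(1)])

lemma reaches_sweep_left: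
  assumes "\<delta> x = Some (y, L)" and "q \<le> p" and "\<forall>i. q < i \<and> i \<le> p \<longrightarrow> t i = x"
  shows "reaches \<delta> (t, p) ((\<lambda>i. if q < i \<and> i \<le> p then y else t i), q)"
  using assms(2,3)
proof (induction "nat (p - q)" arbitrary: p t)
  case 0
  then have "p = q" by simp
  moreover have "(\<lambda>i. if q < i \<and> i \<le> q then y else t i) = t" by (auto simp: fun_eq_iff)
  ultimately show ?case by (simp add: reaches_refl)
next
  case (Suc k)
  have "reaches \<delta> (t, p) (t(p := y), p - 1)"
    using Suc.prems Suc.hyps(2) assms(1) by (intro reaches_tm_step) (simp add: tm_step_Some)
  also have "reaches \<delta> (t(p := y), p - 1)
      ((\<lambda>i. if q < i \<and> i \<le> p - 1 then y else (t(p := y)) i), q)"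
    using Suc by (intro Suc.hyps(1)) auto
  also have "(\<lambda>i. if q < i \<and> i \<le> p - 1 then y else (t(p := y)) i) =
      (\<lambda>i. if q < i \<and> i \<le> p then y else t i)"
    using Suc.hyps(2) by (auto simp: fun_eq_iff)
  finally show ?case .
qed

lemma reaches_sweep_right:
  assumes "\<delta> x = Some (y, R)" and "p \<le> q" and "\<forall>i. p \<le> i \<and> i < q \<longrightarrow> t i = x"
  shows "reaches \<delta> (t, p) ((\<lambda>i. if p \<le> i \<and> i < q then y else t i), q)"
  using assms(2,3)
proof (induction "nat (q - p)" arbitrary: p t)
  case 0
  then have "p = q" by simp
  moreover have "(\<lambda>i. if q \<le> i \<and> i < q then y else t i) = t" by (auto simp: fun_eq_iff)
  ultimately show ?case by (simp add: reaches_refl)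
next
  case (Suc k)
  have "reaches \<delta> (t, p) (t(p := y), p + 1)"
    using Suc.prems Suc.hyps(2) assms(1) by (intro reaches_tm_step) (simp add: tm_step_Some)
  also have "reaches \<delta> (t(p := y), p + 1)
      ((\<lambda>i. if p + 1 \<le> i \<and> i < q then y else (t(p := y)) i), q)"
    using Suc by (intro Suc.hyps(1)) auto
  also have "(\<lambda>i. if p + 1 \<le> i \<and> i < q then y else (t(p := y)) i) =
      (\<lambda>i. if p \<le> i \<and> i < q then y else t i)"
    using Suc.hyps(2) by (auto simp: fun_eq_iff)
  finally show ?case .
qed

lemma not_halts_from_blank_left:
  assumes "\<delta> b = Some (b, L)" and "b \<notin> H" and "\<forall>i\<le>p. t i = b"
  shows "\<not> halts_from H \<delta> (t, p)"
proof -
  have "(tm_step \<delta> ^^ k) (t, p) = (t, p - int k)" for k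
  proof (induction k)
    case (Suc k)
    have "t (p - int k) = b" using assms(3) by simp
    then show ?case using Suc assms(1) by (simp add: tm_step_Some fun_upd_idem algebra_simps)
  qed simp
  then show ?thesis using assms(2,3) by (simp add: halts_from_def)
qed

abbreviation reaches_cc :: "sym config \<Rightarrow> sym config \<Rightarrow> bool" where
  "reaches_cc \<equiv> reaches delta_cc"

abbreviation halts_cc :: "sym config \<Rightarrow> bool" where
  "halts_cc \<equiv> halts_from H_cc delta_cc"

lemma halts_cc_reaches: "reaches_cc c c' \<Longrightarrow> halts_cc c' = halts_cc c"
  by (rule halts_from_reaches) (simp_all add: H_cc_def)

text \<open>Fuel occupies cells \<open>[0, n)\<close>, of which the first \<open>a\<close> are still unspent (\<open>U\<close>); the
  counter starts at cell \<open>n\<close> and its lowest \<open>j\<close> digits all read \<open>s\<close>; \<open>r\<close> gives the rest.\<close>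

definition counter_tape :: "nat \<Rightarrow> nat \<Rightarrow> nat \<Rightarrow> sym \<Rightarrow> (int \<Rightarrow> sym) \<Rightarrow> int \<Rightarrow> sym" where
  "counter_tape n a j s r = (\<lambda>i. if i < 0 then Blank else if i < int a then SU
      else if i < int n then SC else if i < int n + int j then s else r i)"

lemma counter_tape_Suc_digits:
  "a \<le> n \<Longrightarrow> counter_tape n a (Suc j) s r = counter_tape n a j s (r(int n + int j := s))"
  unfolding counter_tape_def by auto

lemma reaches_refuel:
  assumes "1 \<le> a" and "a \<le> n"
  shows "reaches_cc (counter_tape n a j s r, int n - 1) (counter_tape n (a - 1) j s r, int n)"
proof -
  let ?T = "counter_tape n a j s r"
  define t where "t = (\<lambda>i. if int a - 1 < i \<and> i \<le> int n - 1 then SB else ?T i)"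
  have "reaches_cc (?T, int n - 1) (t, int a - 1)"
    unfolding t_def using assms by (intro reaches_sweep_left) (auto simp: counter_tape_def)
  also have "reaches_cc (t, int a - 1) (t(int a - 1 := SC), int a)"
    using assms by (intro reaches_tm_step) (simp add: tm_step_Some t_def counter_tape_def)
  also have "reaches_cc (t(int a - 1 := SC), int a)
      ((\<lambda>i. if int a \<le> i \<and> i < int n then SC else (t(int a - 1 := SC)) i), int n)"
    using assms by (intro reaches_sweep_right) (auto simp: t_def counter_tape_def)
  also have "(\<lambda>i. if int a \<le> i \<and> i < int n then SC else (t(int a - 1 := SC)) i) =
      counter_tape n (a - 1) j s r"
    using assms by (auto simp: fun_eq_iff t_def counter_tape_def)
  finally show ?thesis .
qed

lemma not_halts_cc_out_of_fuel: "\<not> halts_cc (counter_tape n 0 j s r, int n - 1)"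
proof -
  let ?T = "counter_tape n 0 j s r"
  define t where "t = (\<lambda>i. if - 1 < i \<and> i \<le> int n - 1 then SB else ?T i)"
  have "reaches_cc (?T, int n - 1) (t, - 1)"
    unfolding t_def by (intro reaches_sweep_left) (auto simp: counter_tape_def)
  moreover have "\<not> halts_cc (t, - 1)"
    by (rule not_halts_from_blank_left[where b = Blank]) (auto simp: H_cc_def t_def counter_tape_def)
  ultimately show ?thesis
    using halts_cc_reaches by blast
qed

lemma reaches_carry:
  assumes "a \<le> n"
  shows "reaches_cc (counter_tape n a j SZ (r(int n + int j := S0)), int n + int j)
    (counter_tape n a j S0 (r(int n + int j := S1)), int n - 1)"
proof -
  let ?T = "counter_tape n a j SZ (r(int n + int j := S1))"
  have "reaches_cc (counter_tape n a j SZ (r(int n + int j := S0)), int n + int j)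
      (?T, int n + int j - 1)"
    using assms by (intro reaches_tm_step)
      (simp add: tm_step_Some counter_tape_def fun_upd_def fun_eq_iff)
  also have "reaches_cc (?T, int n + int j - 1)
      ((\<lambda>i. if int n - 1 < i \<and> i \<le> int n + int j - 1 then S0 else ?T i), int n - 1)"
    using assms by (intro reaches_sweep_left) (auto simp: counter_tape_def)
  also have "(\<lambda>i. if int n - 1 < i \<and> i \<le> int n + int j - 1 then S0 else ?T i) =
      counter_tape n a j S0 (r(int n + int j := S1))"
    using assms by (auto simp: fun_eq_iff counter_tape_def)
  finally show ?thesis .
qed

lemma reaches_counter_cleared:
  assumes "2 ^ j - 1 \<le> a" and "a \<le> n"
  shows "reaches_cc (counter_tape n a j S0 r, int n)
    (counter_tape n (a - (2 ^ j - 1)) j SZ r, int n + int j)"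
  using assms
proof (induction j arbitrary: a r)
  case 0
  have "counter_tape n a 0 S0 r = counter_tape n a 0 SZ r"
    by (simp add: fun_eq_iff counter_tape_def)
  then show ?case by (simp add: reaches_refl)
next
  case (Suc j)
  define P :: nat where "P = 2 ^ j - 1"
  have cost_Suc: "2 ^ Suc j - 1 = P + 1 + P" and "P + 1 + P \<le> a"
    using Suc.prems(1) by (simp_all add: P_def)
  have "reaches_cc (counter_tape n a (Suc j) S0 r, int n)
      (counter_tape n (a - P) j SZ (r(int n + int j := S0)), int n + int j)"
    using Suc by (simp add: counter_tape_Suc_digits P_def)
  also have "reaches_cc \<dots> (counter_tape n (a - P) j S0 (r(int n + int j := S1)), int n - 1)"
    using Suc.prems by (intro reaches_carry) simp
  also have "reaches_cc \<dots> (counter_tape n (a - P - 1) j S0 (r(int n + int j := S1)), int n)"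
    using Suc.prems \<open>P + 1 + P \<le> a\<close> by (intro reaches_refuel) simp_all
  also have "reaches_cc \<dots>
      (counter_tape n (a - P - 1 - P) j SZ (r(int n + int j := S1)), int n + int j)"
    using Suc.prems \<open>P + 1 + P \<le> a\<close>
    by (intro Suc.IH[of "a - P - 1", folded P_def]) simp_all
  also have "reaches_cc \<dots>
      (counter_tape n (a - (2 ^ Suc j - 1)) (Suc j) SZ r, int n + int (Suc j))"
    using Suc.prems \<open>P + 1 + P \<le> a\<close> unfolding cost_Suc
    by (intro reaches_tm_step)
      (simp add: tm_step_Some counter_tape_def fun_upd_def fun_eq_iff diff_diff_add)
  finally show ?case .
qed

lemma not_halts_cc_counter_starved:
  assumes "a < 2 ^ j - 1" and "a \<le> n"
  shows "\<not> halts_cc (counter_tape n a j S0 r, int n)"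
  using assms
proof (induction j arbitrary: a r)
  case 0
  then show ?case by simp
next
  case (Suc j)
  define P :: nat where "P = 2 ^ j - 1"
  have "a < P + 1 + P"
    using Suc.prems(1) by (simp add: P_def)
  show ?case
  proof (cases "a < P")
    case True
    then show ?thesis
      using Suc by (simp add: counter_tape_Suc_digits P_def)
  next
    case False
    let ?r = "r(int n + int j := S1)"
    have "reaches_cc (counter_tape n a (Suc j) S0 r, int n)
        (counter_tape n (a - P) j SZ (r(int n + int j := S0)), int n + int j)"
      using Suc.prems False reaches_counter_cleared[of j a n]
      by (simp add: counter_tape_Suc_digits P_def)
    also have "reaches_cc \<dots> (counter_tape n (a - P) j S0 ?r, int n - 1)"
      using Suc.prems by (intro reaches_carry) simp
    finally have carry: "reaches_cc (counter_tape n a (Suc j) S0 r, int n)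
        (counter_tape n (a - P) j S0 ?r, int n - 1)" .
    show ?thesis
    proof (cases "a = P")
      case True
      then show ?thesis
        using carry not_halts_cc_out_of_fuel halts_cc_reaches by fastforce
    next
      case False
      then have "reaches_cc (counter_tape n (a - P) j S0 ?r, int n - 1)
          (counter_tape n (a - P - 1) j S0 ?r, int n)"
        using Suc.prems \<open>\<not> a < P\<close> by (intro reaches_refuel) simp_all
      moreover have "\<not> halts_cc (counter_tape n (a - P - 1) j S0 ?r, int n)"
        using Suc.prems \<open>a < P + 1 + P\<close> \<open>\<not> a < P\<close> \<open>a \<noteq> P\<close>
        by (intro Suc.IH[of "a - P - 1", folded P_def]) simp_all
      ultimately show ?thesis
        using carry halts_cc_reaches by (metis reaches_trans)
    qed
  qed
qed

lemma init_config_input_word: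
  "init_config Blank (input_word n m) =
    ((\<lambda>i. if i < 0 then Blank else if i < int n then Su else if i < int n + int m then S0
      else if i = int n + int m then Sh else Blank), 0)"
proof -
  have "input_word n m ! k = (if k < n then Su else if k < n + m then S0 else Sh)"
    if "k < n + m + 1" for k
    using that by (auto simp: input_word_def nth_append)
  then show ?thesis
    by (auto simp: init_config_def input_word_def fun_eq_iff nat_less_iff)
qed

lemma reaches_counter_start:
  "reaches_cc (init_config Blank (input_word n m))
    (counter_tape n n m S0 (\<lambda>i. if i = int n + int m then Sh else Blank), int n)"
proof -
  let ?t = "fst (init_config Blank (input_word n m))"
  have "reaches_cc (?t, 0) ((\<lambda>i. if 0 \<le> i \<and> i < int n then SU else ?t i), int n)"
    by (intro reaches_sweep_right) (auto simp: init_config_input_word)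
  moreover have "(\<lambda>i. if 0 \<le> i \<and> i < int n then SU else ?t i) =
      counter_tape n n m S0 (\<lambda>i. if i = int n + int m then Sh else Blank)"
    by (auto simp: fun_eq_iff init_config_input_word counter_tape_def)
  ultimately show ?thesis
    by (simp add: init_config_input_word)
qed

theorem theorem2:
  fixes n m :: nat
  shows "M_cc_halts (input_word n m) \<longleftrightarrow> n \<ge> 2 ^ m - 1"
proof -
  define r where "r = (\<lambda>i. if i = int n + int m then Sh else Blank)"
  have "M_cc_halts (input_word n m) \<longleftrightarrow> halts_cc (counter_tape n n m S0 r, int n)"
    using halts_cc_reaches[OF reaches_counter_start]
    by (simp add: M_cc_halts_def tm_halts_def halts_from_def r_def)
  also have "\<dots> \<longleftrightarrow> n \<ge> 2 ^ m - 1"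
  proof (cases "n \<ge> 2 ^ m - 1")
    case True
    have "halts_cc (counter_tape n (n - (2 ^ m - 1)) m SZ r, int n + int m)"
      using of_nat_mono[OF diff_le_self[of n "2 ^ m - 1"]]
      by (intro halts_from_halting) (simp add: H_cc_def counter_tape_def r_def)
    then show ?thesis
      using True reaches_counter_cleared[of m n n r] halts_cc_reaches by simp
  next
    case False
    then show ?thesis
      using not_halts_cc_counter_starved[of n m n r] by simp
  qed
  finally show ?thesis .
qed

end
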